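(* Let $n\ge3$, $1\le k\le n$, $c_0>0$, and let $u\in C^2(\overline{\mathbb{R}^n_+})$ be positive with $\sigma_k(A^u)=2^k\binom nk$, $g_u\in\Gamma_k^+$ in $\overline{\mathbb{R}^n_+}$, $\mathcal{B}_k^{g_u}=c_0$ on $\partial\mathbb{R}^n_+$, and assume $u_{0,1}(x):=|x|^{2-n}u(x/|x|^2)$ extends to a positive function in $C^2(\overline{B_1^+})$. Then $\bar\lambda(x)<\infty$ for every $x\in\partial\mathbb{R}^n_+$.
   Context: $B_1^+=B_1\cap\mathbb{R}^n_+$. For $x\in\partial\mathbb{R}^n_+$, $\lambda>0$: $u_{x,\lambda}(y):=\big(\frac{\lambda}{|y-x|}\big)^{n-2}u\big(x+\frac{\lambda^2(y-x)}{|y-x|^2}\big)$, and $\bar\lambda(x):=\sup\{\mu>0: u_{x,\lambda}\le u \text{ in } \overline{\mathbb{R}^n_+}\setminus B_\lambda(x)\ \forall\,0<\lambda<\mu\}$. For positive $C^2$ $u$: $g_u=u^{4/(n-2)}|dx|^2$, $A^u=-\frac{2}{n-2}u^{-\frac{n+2}{n-2}}\nabla^2u+\frac{2n}{(n-2)^2}u^{-\frac{2n}{n-2}}\nabla u\otimes\nabla u-\frac{2}{(n-2)^2}u^{-\frac{2n}{n-2}}|\nabla u|^2I_n$; $\sigma_s$ is the $s$-th elementary symmetric function of eigenvalues; $\Gamma_k^+=\{\lambda:\sigma_1(\lambda)>0,\dots,\sigma_k(\lambda)>0\}$, $g_u\in\Gamma_k^+$ meaning eigenvalues of $A^u$ in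 $\Gamma_k^+$. On $\partial\mathbb{R}^n_+$: $h_{g_u}=-\frac{2}{n-2}u^{-\frac n{n-2}}\partial_{x_n}u$, $A^{\mathrm T}_{g_u}=((A^u)_{\alpha\beta})_{1\le\alpha,\beta\le n-1}$, $\mathcal{B}_k^{g_u}=\frac{(n-1)!}{(n-k)!(2k-1)!!}h_{g_u}^{2k-1}+\sum_{s=1}^{k-1}\frac{(n-1-s)!}{(n-k)!(2k-2s-1)!!}\sigma_s(A^{\mathrm T}_{g_u})h_{g_u}^{2k-2s-1}$. *)

theory Defs
  imports "HOL-Analysis.Analysis"
begin

text \<open>Points of R^n are vectors of type real^'n, n = CARD('n).  The distinguished
index e plays the role of the last coordinate x_n.\<close>

definition halfspace :: "'n::finite \<Rightarrow> (real^'n) set" where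
  "halfspace e = {x. x $ e \<ge> 0}"

definition bdry_halfspace :: "'n::finite \<Rightarrow> (real^'n) set" where
  "bdry_halfspace e = {x. x $ e = 0}"

definition C2_with :: "(real^'n::finite) set \<Rightarrow> (real^'n \<Rightarrow> real) \<Rightarrow> (real^'n \<Rightarrow> real^'n)
     \<Rightarrow> (real^'n \<Rightarrow> real^'n^'n) \<Rightarrow> bool" where
  "C2_with S u Du D2u \<longleftrightarrow>
     (\<forall>x\<in>S. (u has_derivative (\<lambda>h. Du x \<bullet> h)) (at x within S)) \<and>
     (\<forall>x\<in>S. (Du has_derivative (\<lambda>h. D2u x *v h)) (at x within S)) \<and>
     continuous_on S D2u"

definition C2_on :: "(real^'n::finite) set \<Rightarrow> (real^'n \<Rightarrow> real) \<Rightarrow> bool" where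
  "C2_on S u \<longleftrightarrow> (\<exists>Du D2u. C2_with S u Du D2u)"

definition det_on :: "'n set \<Rightarrow> ('n \<Rightarrow> 'n \<Rightarrow> real) \<Rightarrow> real" where
  "det_on I M = (\<Sum>p\<in>{p. p permutes I}. of_int (sign p) * (\<Prod>i\<in>I. M i (p i)))"

definition eigvals_on :: "'n set \<Rightarrow> ('n \<Rightarrow> 'n \<Rightarrow> real) \<Rightarrow> ('n \<Rightarrow> real) \<Rightarrow> bool" where
  "eigvals_on I M lam \<longleftrightarrow>
     (\<forall>t. det_on I (\<lambda>i j. (if i = j then t else 0) - M i j) = (\<Prod>i\<in>I. t - lam i))"

definition esym :: "'n set \<Rightarrow> nat \<Rightarrow> ('n \<Rightarrow> real) \<Rightarrow> real" where
  "esym I s lam = (\<Sum>J\<in>{J. J \<subseteq> I \<and> card J = s}. \<Prod>i\<in>J. lam i)"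

definition Gamma_plus :: "'n set \<Rightarrow> nat \<Rightarrow> ('n \<Rightarrow> real) \<Rightarrow> bool" where
  "Gamma_plus I k lam \<longleftrightarrow> (\<forall>s\<in>{1..k}. esym I s lam > 0)"

definition sigma_mat :: "'n set \<Rightarrow> nat \<Rightarrow> ('n \<Rightarrow> 'n \<Rightarrow> real) \<Rightarrow> real" where
  "sigma_mat I s M = esym I s (SOME lam. eigvals_on I M lam)"

definition in_Gamma_mat :: "'n set \<Rightarrow> nat \<Rightarrow> ('n \<Rightarrow> 'n \<Rightarrow> real) \<Rightarrow> bool" where
  "in_Gamma_mat I k M \<longleftrightarrow> Gamma_plus I k (SOME lam. eigvals_on I M lam)"

text \<open>The Schouten-type tensor A^u at a point, given u, grad u, Hessian u there.\<close>
definition Amat :: "real \<Rightarrow> real^'n::finite \<Rightarrow> real^'n^'n \<Rightarrow> 'n \<Rightarrow> 'n \<Rightarrow> real" where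
  "Amat uv g H i j =
     (let n = real CARD('n) in
       - 2 / (n - 2) * uv powr (- (n + 2) / (n - 2)) * H $ i $ j
       + 2 * n / (n - 2)^2 * uv powr (- 2 * n / (n - 2)) * g $ i * g $ j
       - 2 / (n - 2)^2 * uv powr (- 2 * n / (n - 2)) * (norm g)^2 * (if i = j then 1 else 0))"

text \<open>Mean curvature h on the boundary (e = normal index).\<close>
definition hmean :: "'n::finite \<Rightarrow> real \<Rightarrow> real^'n \<Rightarrow> real" where
  "hmean e uv g = (let n = real CARD('n) in - 2 / (n - 2) * uv powr (- n / (n - 2)) * g $ e)"

definition odd_dfact :: "nat \<Rightarrow> nat" where
  "odd_dfact m = (\<Prod>i\<in>{1..m}. 2 * i - 1)"

definition Bk :: "'n::finite \<Rightarrow> nat \<Rightarrow> real \<Rightarrow> real^'n \<Rightarrow> real^'n^'n \<Rightarrow> real" where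
  "Bk e k uv g H =
     (let n = CARD('n); h = hmean e uv g; AT = Amat uv g H in
       fact (n - 1) / (fact (n - k) * real (odd_dfact k)) * h ^ (2 * k - 1)
       + (\<Sum>s = 1..k - 1. fact (n - 1 - s) / (fact (n - k) * real (odd_dfact (k - s)))
            * sigma_mat (UNIV - {e}) s AT * h ^ (2 * k - 2 * s - 1)))"

definition kelvin :: "(real^'n::finite \<Rightarrow> real) \<Rightarrow> real^'n \<Rightarrow> real \<Rightarrow> real^'n \<Rightarrow> real" where
  "kelvin u x lam y = (lam / norm (y - x)) ^ (CARD('n) - 2)
        * u (x + (lam^2 / (norm (y - x))^2) *\<^sub>R (y - x))"

definition lambda_bar :: "'n::finite \<Rightarrow> (real^'n \<Rightarrow> real) \<Rightarrow> real^'n \<Rightarrow> ereal" where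
  "lambda_bar e u x = Sup (ereal ` {mu. mu > 0 \<and>
      (\<forall>lam. 0 < lam \<and> lam < mu \<longrightarrow>
         (\<forall>y \<in> halfspace e - ball x lam. kelvin u x lam y \<le> u y))})"

end

theory Submission
  imports Defs
begin

text \<open>If lambda_bar(x) were infinite, u would dominate its Kelvin transform u_{x,lambda} for
  every lambda. Along the normal ray y = x + t e_n the transform is
  (lambda/t)^(n-2) u(x + lambda^2/t e_n), roughly lambda^(n-2) u(x) t^(2-n) for large t, whereas
  continuity of u_{0,1} at the origin gives u(y) <= C |y|^(2-n) for large |y|. Comparing the two
  yields lambda^(n-2) u(x) <= 2^(n-1) C, which fails for large lambda.\<close>

definition sphere_inversion :: "'a::real_normed_vector \<Rightarrow> 'a" where
  "sphere_inversion z = (1 / (norm z)\<^sup>2) *\<^sub>R z"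

lemma norm_sphere_inversion: "norm (sphere_inversion z) = 1 / norm z"
  by (simp add: sphere_inversion_def power2_eq_square)

lemma sphere_inversion_involutive: "sphere_inversion (sphere_inversion z) = z"
  by (cases "z = 0") (simp_all add: sphere_inversion_def field_simps power2_eq_square)

lemma sphere_inversion_in_halfspace:
  "y \<in> halfspace e \<Longrightarrow> sphere_inversion y \<in> halfspace e"
  by (simp add: sphere_inversion_def halfspace_def)

lemma C2_with_imp_continuous_on: "C2_with S u Du D2u \<Longrightarrow> continuous_on S u"
  unfolding C2_with_def continuous_on_eq_continuous_within
  using has_derivative_continuous by blast

lemma C2_on_imp_continuous_on: "C2_on S u \<Longrightarrow> continuous_on S u"
  unfolding C2_on_def using C2_with_imp_continuous_on by blast

lemma lambda_bar_le_of_kelvin_violation: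
  assumes "0 < lam" "y \<in> halfspace e - ball x lam" "u y < kelvin u x lam y"
  shows "lambda_bar e u x \<le> ereal lam"
  unfolding lambda_bar_def
proof (rule Sup_least)
  fix w assume "w \<in> ereal ` {mu. mu > 0 \<and> (\<forall>lam. 0 < lam \<and> lam < mu \<longrightarrow>
      (\<forall>y \<in> halfspace e - ball x lam. kelvin u x lam y \<le> u y))}"
  then obtain mu where "w = ereal mu" and mu: "\<forall>lam. 0 < lam \<and> lam < mu \<longrightarrow>
      (\<forall>y \<in> halfspace e - ball x lam. kelvin u x lam y \<le> u y)" by blast
  have "\<not> lam < mu" using mu assms by force
  then show "w \<le> ereal lam" using \<open>w = ereal mu\<close> by simp
qed

lemma decay_of_inversion_continuous:
  fixes u v :: "real^'n::finite \<Rightarrow> real" and N :: nat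
  assumes cont: "continuous_on (cball 0 1 \<inter> halfspace e) v"
    and inv: "\<forall>z\<in>cball 0 1 \<inter> halfspace e - {0}.
                v z = norm z powr (- real N) * u (sphere_inversion z)"
  shows "\<exists>C R. \<forall>y\<in>halfspace e. R \<le> norm y \<longrightarrow> norm y ^ N * u y \<le> C"
proof -
  have "0 \<in> cball 0 1 \<inter> halfspace e" by (simp add: halfspace_def)
  then obtain d where d: "d > 0"
    and near0: "\<forall>z\<in>cball 0 1 \<inter> halfspace e. dist z 0 < d \<longrightarrow> dist (v z) (v 0) < 1"
    using cont unfolding continuous_on_iff by (meson zero_less_one)
  have "norm y ^ N * u y \<le> v 0 + 1"
    if y: "y \<in> halfspace e" "1 + 2 / d \<le> norm y" for y
  proof -
    define z where "z = sphere_inversion y"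
    have "2 / d > 0" using d by simp
    then have ny: "norm y \<ge> 1" "norm y > 2 / d" using y by linarith+
    have nz: "norm z = 1 / norm y" by (simp add: z_def norm_sphere_inversion)
    have "z \<in> cball 0 1 \<inter> halfspace e - {0}"
      using ny nz y sphere_inversion_in_halfspace[OF y(1)] by (auto simp: z_def divide_le_eq_1)
    moreover have "dist z 0 < d"
      using nz ny d by (simp add: divide_less_eq mult.commute)
    ultimately have "v z < v 0 + 1" using near0 by (auto simp: dist_real_def)
    moreover have "v z = norm y ^ N * u y"
      using inv \<open>z \<in> _\<close> ny nz
      by (simp add: z_def sphere_inversion_involutive powr_minus_divide powr_divide powr_realpow power_one_over)
    ultimately show ?thesis by simp
  qed
  then show ?thesis by blast
qed

lemma kelvin_on_normal_ray:
  fixes x :: "real^'n::finite"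
  assumes "t > 0"
  shows "kelvin u x lam (x + t *\<^sub>R axis e 1)
           = (lam / t) ^ (CARD('n) - 2) * u (x + (lam\<^sup>2 / t) *\<^sub>R axis e (1::real))"
  using assms by (simp add: kelvin_def power2_eq_square)

lemma kelvin_lower_bound_on_normal_ray:
  fixes u :: "real^'n::finite \<Rightarrow> real"
  assumes cont: "continuous_on (halfspace e) u" and x: "x \<in> bdry_halfspace e"
    and ux: "u x > 0" and lam: "lam > 0"
  shows "\<exists>T>0. \<forall>t\<ge>T. (lam / t) ^ (CARD('n) - 2) * (u x / 2) \<le> kelvin u x lam (x + t *\<^sub>R axis e 1)"
proof -
  have xH: "x \<in> halfspace e" using x by (simp add: bdry_halfspace_def halfspace_def)
  then obtain d where d: "d > 0"
    and near: "\<forall>z\<in>halfspace e. dist z x < d \<longrightarrow> dist (u z) (u x) < u x / 2"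
    using cont ux unfolding continuous_on_iff by (meson half_gt_zero)
  have "(lam / t) ^ (CARD('n) - 2) * (u x / 2) \<le> kelvin u x lam (x + t *\<^sub>R axis e 1)"
    if t: "t \<ge> lam\<^sup>2 / d + 1" for t
  proof -
    have t0: "t > 0" using t d by (smt (verit) divide_nonneg_pos zero_le_power2)
    define z where "z = x + (lam\<^sup>2 / t) *\<^sub>R axis e (1::real)"
    have "z \<in> halfspace e" using x t0 by (simp add: z_def halfspace_def bdry_halfspace_def)
    moreover have "dist z x < d"
    proof -
      have "lam\<^sup>2 < d * t" using t d by (simp add: field_simps)
      then show ?thesis using t0 by (simp add: z_def dist_norm field_simps)
    qed
    ultimately have "\<bar>u z - u x\<bar> < u x / 2" using near by (simp add: dist_real_def)
    then have "u x / 2 \<le> u z" by linarith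
    then show ?thesis
      using t0 lam by (simp add: kelvin_on_normal_ray z_def[symmetric] mult_left_mono)
  qed
  moreover have "lam\<^sup>2 / d + 1 > 0" using d by (simp add: add_nonneg_pos)
  ultimately show ?thesis by blast
qed

lemma kelvin_violation_of_decay:
  fixes u :: "real^'n::finite \<Rightarrow> real"
  assumes n3: "CARD('n) \<ge> 3"
    and cont: "continuous_on (halfspace e) u" and pos: "\<forall>y\<in>halfspace e. u y > 0"
    and x: "x \<in> bdry_halfspace e"
    and decay: "\<forall>y\<in>halfspace e. R \<le> norm y \<longrightarrow> norm y ^ (CARD('n) - 2) * u y \<le> C"
  shows "\<exists>lam>0. \<exists>y\<in>halfspace e - ball x lam. u y < kelvin u x lam y"
proof -
  define N where "N = CARD('n) - 2"
  have xH: "x \<in> halfspace e" using x by (simp add: bdry_halfspace_def halfspace_def)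
  have ux: "u x > 0" using pos xH by blast
  define lam where "lam = max 1 (2 ^ (N + 1) * C / u x + 1)"
  have lam1: "lam \<ge> 1" by (simp add: lam_def)
  have big: "2 ^ N * C < lam ^ N * u x / 2"
  proof -
    have "2 ^ (N + 1) * C / u x + 1 \<le> lam" by (simp add: lam_def)
    then have "2 ^ (N + 1) * C + u x \<le> lam * u x" using ux by (simp add: field_simps)
    then have "2 ^ (N + 1) * C < lam * u x" using ux by linarith
    also have "\<dots> \<le> lam ^ N * u x"
      using lam1 n3 ux by (simp add: N_def power_increasing[of 1, simplified])
    finally show ?thesis by simp
  qed
  obtain T where T: "T > 0"
    and lower: "\<forall>t\<ge>T. (lam / t) ^ N * (u x / 2) \<le> kelvin u x lam (x + t *\<^sub>R axis e 1)"
    using kelvin_lower_bound_on_normal_ray[OF cont x ux, of lam] lam1 unfolding N_def by auto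
  define t where "t = max (max T lam) (max (2 * norm x) (2 * R))"
  define y where "y = x + t *\<^sub>R axis e 1"
  have t: "t \<ge> T" "t \<ge> lam" "t \<ge> 2 * norm x" "t \<ge> 2 * R" "t > 0"
    using T by (auto simp: t_def)
  have nyx: "norm (y - x) = t" using t by (simp add: y_def)
  have ny: "norm y \<ge> t / 2" using norm_triangle_ineq4[of y x] nyx t by simp
  have yH: "y \<in> halfspace e" using x t by (simp add: y_def halfspace_def bdry_halfspace_def)
  have "y \<notin> ball x lam" using nyx t by (simp add: dist_norm norm_minus_commute)
  moreover have "u y < kelvin u x lam y"
  proof -
    have "(t / 2) ^ N * u y \<le> norm y ^ N * u y"
      using ny t pos yH by (intro mult_right_mono power_mono) (auto simp: less_imp_le)
    also have "\<dots> \<le> C" using decay yH ny t by (simp add: N_def)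
    finally have "(t / 2) ^ N * u y \<le> C" .
    moreover have "(t / 2) ^ N * ((lam / t) ^ N * (u x / 2)) = lam ^ N * u x / 2 / 2 ^ N"
      using t by (simp add: power_divide field_simps)
    ultimately have "(t / 2) ^ N * u y < (t / 2) ^ N * ((lam / t) ^ N * (u x / 2))"
      using big by (simp add: field_simps)
    then have "u y < (lam / t) ^ N * (u x / 2)" using t by simp
    with lower t show ?thesis by (force simp: y_def)
  qed
  ultimately show ?thesis using yH lam1 by (intro exI[of _ lam]) auto
qed

theorem lemma3p4:
  fixes e :: "'n::finite"
    and u :: "real^'n \<Rightarrow> real" and Du :: "real^'n \<Rightarrow> real^'n" and D2u :: "real^'n \<Rightarrow> real^'n^'n"
    and k :: nat and c0 :: real
  assumes n3: "CARD('n) \<ge> 3"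
    and k: "1 \<le> k" "k \<le> CARD('n)"
    and c0: "c0 > 0"
    and C2: "C2_with (halfspace e) u Du D2u"
    and pos: "\<forall>x\<in>halfspace e. u x > 0"
    and eq: "\<forall>x\<in>halfspace e.
               sigma_mat UNIV k (Amat (u x) (Du x) (D2u x)) = 2 ^ k * real (CARD('n) choose k)"
    and cone: "\<forall>x\<in>halfspace e. in_Gamma_mat UNIV k (Amat (u x) (Du x) (D2u x))"
    and bdry: "\<forall>x\<in>bdry_halfspace e. Bk e k (u x) (Du x) (D2u x) = c0"
    and ext: "\<exists>v. C2_on (cball 0 1 \<inter> halfspace e) v
               \<and> (\<forall>x\<in>cball 0 1 \<inter> halfspace e. v x > 0)
               \<and> (\<forall>x\<in>cball 0 1 \<inter> halfspace e - {0}.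
                    v x = norm x powr (2 - real CARD('n)) * u ((1 / (norm x)^2) *\<^sub>R x))"
  shows "\<forall>x\<in>bdry_halfspace e. lambda_bar e u x < \<infinity>"
proof
  fix x assume x: "x \<in> bdry_halfspace e"
  obtain v where v: "C2_on (cball 0 1 \<inter> halfspace e) v"
    and inv: "\<forall>z\<in>cball 0 1 \<inter> halfspace e - {0}.
                v z = norm z powr (2 - real CARD('n)) * u (sphere_inversion z)"
    using ext unfolding sphere_inversion_def by blast
  have "2 - real CARD('n) = - real (CARD('n) - 2)" using n3 by simp
  then obtain C R where "\<forall>y\<in>halfspace e. R \<le> norm y \<longrightarrow> norm y ^ (CARD('n) - 2) * u y \<le> C"
    using decay_of_inversion_continuous[OF C2_on_imp_continuous_on[OF v]] inv by metis
  then obtain lam y where "0 < lam" "y \<in> halfspace e - ball x lam" "u y < kelvin u x lam y"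
    using kelvin_violation_of_decay[OF n3 C2_with_imp_continuous_on[OF C2] pos x] by blast
  then have "lambda_bar e u x \<le> ereal lam" by (rule lambda_bar_le_of_kelvin_violation)
  then show "lambda_bar e u x < \<infinity>" by (rule le_less_trans) simp
qed

end
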